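(* Let $\Gamma$ be a propositional theory and $Q$ a set of atoms such that every positive occurrence in $\Gamma$ of an atom from $Q$ is in the scope of negation. For each $q\in Q$ let $Def(q)$ be a formula such that every negative occurrence in $Def(q)$ of an atom from $Q$ is in the scope of negation. Then $\Gamma\cup\{Def(q)\to q:q\in Q\}$ and $\Gamma\cup\{Def(q)\leftrightarrow q:q\in Q\}$ have the same stable models.
   Context: Formulas are built from atoms and $\bot$ using $\wedge,\vee,\to$; $\top$, $\neg F$ and $F\leftrightarrow G$ abbreviate $\bot\to\bot$, $F\to\bot$ and $(F\to G)\wedge(G\to F)$. Reduct: $\bot^X=\bot$; $a^X=a$ if $a\in X$, else $\bot$; $(F\otimes G)^X=F^X\otimes G^X$ if $X\models F\otimes G$, else $\bot$; $\Gamma^X=\{F^X:F\in\Gamma\}$. $X$ is a stable model of $\Gamma$ if $X\models\Gamma^X$ and no proper subset of $X$ satisfies $\Gamma^X$. An occurrence of an atom in a formula (with abbreviations expanded) is positive if it is in the antecedent of an even number of implications and negative if odd. An occurrence is in the scope of negation if it occurs inside a subformula of the form $\neg F$, i.e. $F\to\bot$. *)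

theory Defs
  imports Main
begin

datatype 'a form = Bot | Atom 'a | And "'a form" "'a form" | Or "'a form" "'a form"
  | Imp "'a form" "'a form"

definition Top :: "'a form" where "Top = Imp Bot Bot"
definition Neg :: "'a form \<Rightarrow> 'a form" where "Neg F = Imp F Bot"
definition Iff :: "'a form \<Rightarrow> 'a form \<Rightarrow> 'a form" where
  "Iff F G = And (Imp F G) (Imp G F)"

fun sat :: "'a set \<Rightarrow> 'a form \<Rightarrow> bool" where
  "sat X Bot = False"
| "sat X (Atom a) = (a \<in> X)"
| "sat X (And F G) = (sat X F \<and> sat X G)"
| "sat X (Or F G) = (sat X F \<or> sat X G)"
| "sat X (Imp F G) = (sat X F \<longrightarrow> sat X G)"

definition sats :: "'a set \<Rightarrow> 'a form set \<Rightarrow> bool" where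
  "sats X \<Gamma> = (\<forall>F\<in>\<Gamma>. sat X F)"

fun reduct :: "'a form \<Rightarrow> 'a set \<Rightarrow> 'a form" where
  "reduct Bot X = Bot"
| "reduct (Atom a) X = (if a \<in> X then Atom a else Bot)"
| "reduct (And F G) X = (if sat X (And F G) then And (reduct F X) (reduct G X) else Bot)"
| "reduct (Or F G) X = (if sat X (Or F G) then Or (reduct F X) (reduct G X) else Bot)"
| "reduct (Imp F G) X = (if sat X (Imp F G) then Imp (reduct F X) (reduct G X) else Bot)"

definition reduct_set :: "'a form set \<Rightarrow> 'a set \<Rightarrow> 'a form set" where
  "reduct_set \<Gamma> X = (\<lambda>F. reduct F X) ` \<Gamma>"

definition stable_model :: "'a set \<Rightarrow> 'a form set \<Rightarrow> bool" where
  "stable_model X \<Gamma> = (sats X (reduct_set \<Gamma> X) \<and>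
     \<not> (\<exists>Y. Y \<subset> X \<and> sats Y (reduct_set \<Gamma> X)))"

(* occurrences of atoms: (atom, positive?, in scope of negation?)
   positive = in the antecedent of an even number of implications;
   in scope of negation = inside the antecedent F of some subformula F \<rightarrow> Bot *)
fun occs :: "'a form \<Rightarrow> ('a \<times> bool \<times> bool) set" where
  "occs Bot = {}"
| "occs (Atom a) = {(a, True, False)}"
| "occs (And F G) = occs F \<union> occs G"
| "occs (Or F G) = occs F \<union> occs G"
| "occs (Imp F G) = (\<lambda>(a, p, n). (a, \<not> p, n \<or> G = Bot)) ` occs F \<union> occs G"

end

theory Submission
  imports Defs
begin

(* Call a formula Q-positive-guarded (Q-negative-guarded) when each of its positive
   (negative) occurrences of an atom from Q lies in the scope of a negation.  The
   central fact is a monotonicity property of reducts: for W \<subseteq> X, the truth of the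
   reduct F^X in W is anti-monotone in the Q-atoms of W when F is Q-positive-guarded
   and monotone when F is Q-negative-guarded; an atom under a negation is invisible,
   since (G \<rightarrow> \<bottom>)^X only depends on X.

   Stable models of \<Gamma> \<union> {Def q \<leftrightarrow> q} are stable models of \<Gamma> \<union> {Def q \<rightarrow> q}: a
   reduct of Def q \<leftrightarrow> q implies the reduct of Def q \<rightarrow> q, and a smaller model Y
   of the weaker reduct is shrunk to one of the stronger reduct by keeping only the
   Q-atoms in the least fixed point of "q is supported by Def q" (Knaster-Tarski).
   Conversely, a stable model X of \<Gamma> \<union> {Def q \<rightarrow> q} satisfies q \<rightarrow> Def q, since
   otherwise X - {q} would violate its minimality. *)

lemma sat_reduct_self: "sat X (reduct F X) \<longleftrightarrow> sat X F"
  by (induction F) auto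

lemma sat_reduct_subset: "W \<subseteq> X \<Longrightarrow> sat W (reduct F X) \<Longrightarrow> sat X F"
  by (cases F) (auto split: if_splits)

lemma sat_reduct_Iff:
  "sat W (reduct (Iff F G) X) \<longleftrightarrow> sat W (reduct (Imp F G) X) \<and> sat W (reduct (Imp G F) X)"
  by (auto simp: Iff_def)

lemma stable_modelI:
  assumes "\<forall>F\<in>\<Gamma>. sat X F"
    and "\<And>Y. Y \<subset> X \<Longrightarrow> \<forall>F\<in>\<Gamma>. sat Y (reduct F X) \<Longrightarrow> False"
  shows "stable_model X \<Gamma>"
  using assms by (auto simp: stable_model_def sats_def reduct_set_def sat_reduct_self)

lemma stable_model_sat: "stable_model X \<Gamma> \<Longrightarrow> F \<in> \<Gamma> \<Longrightarrow> sat X F"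
  by (auto simp: stable_model_def sats_def reduct_set_def sat_reduct_self)

lemma stable_model_minimal:
  "stable_model X \<Gamma> \<Longrightarrow> Y \<subset> X \<Longrightarrow> \<forall>F\<in>\<Gamma>. sat Y (reduct F X) \<Longrightarrow> False"
  unfolding stable_model_def sats_def reduct_set_def by blast

definition pos_guarded :: "'a set \<Rightarrow> 'a form \<Rightarrow> bool" where
  "pos_guarded Q F \<longleftrightarrow> (\<forall>(a, p, n)\<in>occs F. a \<in> Q \<and> p \<longrightarrow> n)"

definition neg_guarded :: "'a set \<Rightarrow> 'a form \<Rightarrow> bool" where
  "neg_guarded Q F \<longleftrightarrow> (\<forall>(a, p, n)\<in>occs F. a \<in> Q \<and> \<not> p \<longrightarrow> n)"

lemma guarded_Atom: "pos_guarded Q (Atom a) \<longleftrightarrow> a \<notin> Q"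
  by (simp add: pos_guarded_def)

lemma guarded_And:
  "pos_guarded Q (And F G) \<longleftrightarrow> pos_guarded Q F \<and> pos_guarded Q G"
  "neg_guarded Q (And F G) \<longleftrightarrow> neg_guarded Q F \<and> neg_guarded Q G"
  by (simp_all add: pos_guarded_def neg_guarded_def ball_Un)

lemma guarded_Or:
  "pos_guarded Q (Or F G) \<longleftrightarrow> pos_guarded Q F \<and> pos_guarded Q G"
  "neg_guarded Q (Or F G) \<longleftrightarrow> neg_guarded Q F \<and> neg_guarded Q G"
  by (simp_all add: pos_guarded_def neg_guarded_def ball_Un)

lemma guarded_Imp:
  assumes "G \<noteq> Bot"
  shows "pos_guarded Q (Imp F G) \<longleftrightarrow> neg_guarded Q F \<and> pos_guarded Q G"
    and "neg_guarded Q (Imp F G) \<longleftrightarrow> pos_guarded Q F \<and> neg_guarded Q G"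
  using assms by (simp_all add: pos_guarded_def neg_guarded_def ball_Un split_def)

lemma sat_reduct_connectives:
  "sat W (reduct (And F G) X) \<longleftrightarrow> sat X (And F G) \<and> sat W (reduct F X) \<and> sat W (reduct G X)"
  "sat W (reduct (Or F G) X) \<longleftrightarrow> sat X (Or F G) \<and> (sat W (reduct F X) \<or> sat W (reduct G X))"
  "sat W (reduct (Imp F G) X) \<longleftrightarrow> sat X (Imp F G) \<and> (sat W (reduct F X) \<longrightarrow> sat W (reduct G X))"
  by auto

lemma sat_reduct_Neg: "W \<subseteq> X \<Longrightarrow> sat W (reduct (Imp F Bot) X) \<longleftrightarrow> \<not> sat X F"
  using sat_reduct_subset[of W X F] by (auto simp: sat_reduct_connectives)

lemma reduct_guarded_mono:
  assumes "Z \<subseteq> Y" "Y \<subseteq> X" "Y - Z \<subseteq> Q"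
  shows "(pos_guarded Q F \<longrightarrow> sat Y (reduct F X) \<longrightarrow> sat Z (reduct F X)) \<and>
         (neg_guarded Q F \<longrightarrow> sat Z (reduct F X) \<longrightarrow> sat Y (reduct F X))"
proof (induction F)
  case Bot
  then show ?case by simp
next
  case (Atom a)
  then show ?case using assms by (auto simp: guarded_Atom)
next
  case (And F G)
  then show ?case unfolding guarded_And sat_reduct_connectives by blast
next
  case (Or F G)
  then show ?case unfolding guarded_Or sat_reduct_connectives by blast
next
  case (Imp F G)
  show ?case
  proof (cases "G = Bot")
    case True
    have "Z \<subseteq> X" using assms by blast
    then show ?thesis
      unfolding True sat_reduct_Neg[OF \<open>Y \<subseteq> X\<close>] sat_reduct_Neg[OF \<open>Z \<subseteq> X\<close>] by blast
  next
    case False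
    then show ?thesis
      unfolding guarded_Imp[OF False] sat_reduct_connectives using Imp.IH by blast
  qed
qed

corollary reduct_antimono:
  "\<lbrakk>pos_guarded Q F; Z \<subseteq> Y; Y \<subseteq> X; Y - Z \<subseteq> Q; sat Y (reduct F X)\<rbrakk>
     \<Longrightarrow> sat Z (reduct F X)"
  using reduct_guarded_mono by blast

corollary reduct_mono:
  "\<lbrakk>neg_guarded Q F; Z \<subseteq> Y; Y \<subseteq> X; Y - Z \<subseteq> Q; sat Z (reduct F X)\<rbrakk>
     \<Longrightarrow> sat Y (reduct F X)"
  using reduct_guarded_mono by blast

(* In a stable model of \<Gamma> \<union> {Def q \<rightarrow> q}, every true atom q \<in> Q is supported by
   Def q: otherwise X - {q} satisfies the reduct, contradicting minimality. *)
lemma stable_imps_supported: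
  assumes \<Gamma>: "\<forall>F\<in>\<Gamma>. pos_guarded Q F"
    and st: "stable_model X (\<Gamma> \<union> {Imp (Def q) (Atom q) | q. q \<in> Q})"
    and q: "q \<in> Q" "q \<in> X"
  shows "sat X (Def q)"
proof (rule ccontr)
  assume unsupported: "\<not> sat X (Def q)"
  define Y where "Y = X - {q}"
  have models_\<Gamma>: "\<forall>F\<in>\<Gamma>. sat X (reduct F X)"
    using stable_model_sat[OF st] by (simp add: sat_reduct_self)
  have closed: "\<forall>r\<in>Q. sat X (Def r) \<longrightarrow> r \<in> X"
    using stable_model_sat[OF st] by fastforce
  have "Y \<subseteq> X" "X - Y \<subseteq> Q" using q by (auto simp: Y_def)
  then have "\<forall>F\<in>\<Gamma>. sat Y (reduct F X)"
    using models_\<Gamma> \<Gamma> reduct_antimono[of Q _ Y X X] by blast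
  moreover have "sat Y (reduct (Imp (Def r) (Atom r)) X)" if "r \<in> Q" for r
  proof -
    have "r \<in> Y" if "sat Y (reduct (Def r) X)"
      using that sat_reduct_subset[of Y X "Def r"] unsupported closed \<open>r \<in> Q\<close>
      by (auto simp: Y_def)
    then show ?thesis using closed \<open>r \<in> Q\<close> by (auto simp: Y_def)
  qed
  ultimately have "\<forall>F\<in>\<Gamma> \<union> {Imp (Def r) (Atom r) | r. r \<in> Q}. sat Y (reduct F X)"
    by blast
  moreover have "Y \<subset> X" using q by (auto simp: Y_def)
  ultimately show False using stable_model_minimal[OF st] by blast
qed

(* The reducts of the biconditionals are stronger than those of the implications, so
   minimality transfers; the model condition holds by the previous lemma. *)
lemma stable_imps_imp_iffs:
  assumes "\<forall>F\<in>\<Gamma>. pos_guarded Q F"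
    and st: "stable_model X (\<Gamma> \<union> {Imp (Def q) (Atom q) | q. q \<in> Q})"
  shows "stable_model X (\<Gamma> \<union> {Iff (Def q) (Atom q) | q. q \<in> Q})"
proof -
  have "sat X (Def q)" if "q \<in> Q" "q \<in> X" for q
    using stable_imps_supported[OF assms that] .
  then have "\<forall>F\<in>\<Gamma> \<union> {Iff (Def q) (Atom q) | q. q \<in> Q}. sat X F"
    using stable_model_sat[OF st] by (fastforce simp: Iff_def)
  moreover have False
    if "Y \<subset> X" and "\<forall>F\<in>\<Gamma> \<union> {Iff (Def q) (Atom q) | q. q \<in> Q}. sat Y (reduct F X)" for Y
  proof -
    have "\<forall>F\<in>\<Gamma> \<union> {Imp (Def q) (Atom q) | q. q \<in> Q}. sat Y (reduct F X)"
      using that(2) sat_reduct_Iff by blast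
    then show False by (rule stable_model_minimal[OF st \<open>Y \<subset> X\<close>])
  qed
  ultimately show ?thesis by (rule stable_modelI)
qed

(* Take the least fixed
   point of this support operator: it is monotone because the Def q are
   Q-negative-guarded, and Y \<inter> Q is a pre-fixed point because Y is closed. *)
lemma least_supported_subset:
  assumes Def: "\<forall>q\<in>Q. neg_guarded Q (Def q)"
    and "Y \<subseteq> X"
    and closed: "\<forall>q\<in>Q. sat Y (reduct (Imp (Def q) (Atom q)) X)"
  obtains S where "S \<subseteq> Y \<inter> Q"
    and "\<forall>q\<in>Q \<inter> X. q \<in> S \<longleftrightarrow> sat ((Y - Q) \<union> S) (reduct (Def q) X)"
proof -
  define W where "W S = (Y - Q) \<union> (S \<inter> Q \<inter> X)" for S
  define supp where "supp S = {q \<in> Q \<inter> X. sat (W S) (reduct (Def q) X)}" for S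
  have "mono supp"
  proof (rule monoI)
    fix S T :: "'a set"
    assume "S \<subseteq> T"
    then have "W S \<subseteq> W T" "W T \<subseteq> X" "W T - W S \<subseteq> Q"
      using \<open>Y \<subseteq> X\<close> by (auto simp: W_def)
    then show "supp S \<subseteq> supp T"
      using Def reduct_mono[of Q _ "W S" "W T" X] by (auto simp: supp_def)
  qed
  define S where "S = lfp supp"
  have fixpoint: "S = supp S"
    unfolding S_def using \<open>mono supp\<close> by (rule lfp_unfold)
  have "W (Y \<inter> Q) = Y" using \<open>Y \<subseteq> X\<close> by (auto simp: W_def)
  then have "supp (Y \<inter> Q) \<subseteq> Y \<inter> Q"
    using closed by (auto simp: supp_def split: if_splits)
  then have "S \<subseteq> Y \<inter> Q" unfolding S_def by (rule lfp_lowerbound)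
  moreover have "W S = (Y - Q) \<union> S" and "S \<subseteq> Q \<inter> X"
    using fixpoint[unfolded supp_def] by (auto simp: W_def)
  ultimately show thesis
    using that fixpoint by (metis (no_types, lifting) mem_Collect_eq supp_def)
qed

lemma shrink_to_iffs:
  assumes \<Gamma>: "\<forall>F\<in>\<Gamma>. pos_guarded Q F"
    and Def: "\<forall>q\<in>Q. neg_guarded Q (Def q)"
    and completed: "\<forall>q\<in>Q. sat X (Def q) \<longleftrightarrow> q \<in> X"
    and "Y \<subset> X"
    and Y: "\<forall>F\<in>\<Gamma> \<union> {Imp (Def q) (Atom q) | q. q \<in> Q}. sat Y (reduct F X)"
  shows "\<exists>Y'\<subset>X. \<forall>F\<in>\<Gamma> \<union> {Iff (Def q) (Atom q) | q. q \<in> Q}. sat Y' (reduct F X)"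
proof -
  have "Y \<subseteq> X" using \<open>Y \<subset> X\<close> by blast
  moreover have "\<forall>q\<in>Q. sat Y (reduct (Imp (Def q) (Atom q)) X)"
    using Y by blast
  ultimately obtain S where "S \<subseteq> Y \<inter> Q"
    and S: "\<forall>q\<in>Q \<inter> X. q \<in> S \<longleftrightarrow> sat ((Y - Q) \<union> S) (reduct (Def q) X)"
    by (rule least_supported_subset[OF Def])
  define Y' where "Y' = (Y - Q) \<union> S"
  have "Y' \<subseteq> Y" "Y - Y' \<subseteq> Q" "Y' \<subset> X"
    using \<open>S \<subseteq> Y \<inter> Q\<close> \<open>Y \<subset> X\<close> by (auto simp: Y'_def)
  have "\<forall>F\<in>\<Gamma>. sat Y' (reduct F X)"
  proof
    fix F assume "F \<in> \<Gamma>"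
    then show "sat Y' (reduct F X)"
      using \<Gamma> Y \<open>Y' \<subseteq> Y\<close> \<open>Y - Y' \<subseteq> Q\<close> \<open>Y \<subset> X\<close> reduct_antimono[of Q F Y' Y X]
      by blast
  qed
  moreover have "sat Y' (reduct (Iff (Def q) (Atom q)) X)" if "q \<in> Q" for q
  proof (cases "q \<in> X")
    case True
    have "q \<in> Y' \<longleftrightarrow> q \<in> S" using \<open>S \<subseteq> Y \<inter> Q\<close> \<open>q \<in> Q\<close> by (auto simp: Y'_def)
    also have "\<dots> \<longleftrightarrow> sat Y' (reduct (Def q) X)"
      using S \<open>q \<in> Q\<close> True unfolding Y'_def by blast
    finally have "q \<in> Y' \<longleftrightarrow> sat Y' (reduct (Def q) X)" .
    moreover have "sat X (Iff (Def q) (Atom q))" using completed \<open>q \<in> Q\<close> by (simp add: Iff_def)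
    ultimately show ?thesis using True by (simp add: Iff_def)
  next
    case False
    then have "\<not> sat Y' (reduct (Def q) X)"
      using completed \<open>q \<in> Q\<close> \<open>Y' \<subset> X\<close> sat_reduct_subset[of Y' X] by blast
    moreover have "sat X (Iff (Def q) (Atom q))" using completed \<open>q \<in> Q\<close> by (simp add: Iff_def)
    ultimately show ?thesis using False by (simp add: Iff_def)
  qed
  ultimately show ?thesis using \<open>Y' \<subset> X\<close> by blast
qed

lemma stable_iffs_imp_imps:
  assumes "\<forall>F\<in>\<Gamma>. pos_guarded Q F" "\<forall>q\<in>Q. neg_guarded Q (Def q)"
    and st: "stable_model X (\<Gamma> \<union> {Iff (Def q) (Atom q) | q. q \<in> Q})"
  shows "stable_model X (\<Gamma> \<union> {Imp (Def q) (Atom q) | q. q \<in> Q})"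
proof -
  have models: "\<forall>F\<in>\<Gamma> \<union> {Iff (Def q) (Atom q) | q. q \<in> Q}. sat X F"
    using stable_model_sat[OF st] by blast
  then have "\<forall>q\<in>Q. sat X (Iff (Def q) (Atom q))"
    by blast
  then have completed: "\<forall>q\<in>Q. sat X (Def q) \<longleftrightarrow> q \<in> X"
    by (auto simp: Iff_def)
  have "\<forall>F\<in>\<Gamma> \<union> {Imp (Def q) (Atom q) | q. q \<in> Q}. sat X F"
    using models completed by auto
  moreover have False
    if "Y \<subset> X" "\<forall>F\<in>\<Gamma> \<union> {Imp (Def q) (Atom q) | q. q \<in> Q}. sat Y (reduct F X)" for Y
    using shrink_to_iffs[OF assms(1,2) completed that] stable_model_minimal[OF st] by blast
  ultimately show ?thesis by (rule stable_modelI)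
qed

theorem proposition9:
  fixes \<Gamma> :: "'a form set" and Q :: "'a set" and Def :: "'a \<Rightarrow> 'a form"
  assumes "\<forall>F\<in>\<Gamma>. \<forall>(a, p, n)\<in>occs F. a \<in> Q \<and> p \<longrightarrow> n"
    and "\<forall>q\<in>Q. \<forall>(a, p, n)\<in>occs (Def q). a \<in> Q \<and> \<not> p \<longrightarrow> n"
  shows "{X. stable_model X (\<Gamma> \<union> {Imp (Def q) (Atom q) | q. q \<in> Q})}
       = {X. stable_model X (\<Gamma> \<union> {Iff (Def q) (Atom q) | q. q \<in> Q})}"
proof -
  have \<Gamma>: "\<forall>F\<in>\<Gamma>. pos_guarded Q F"
    using assms(1) by (simp add: pos_guarded_def)
  have Def: "\<forall>q\<in>Q. neg_guarded Q (Def q)"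
    using assms(2) by (simp add: neg_guarded_def)
  show ?thesis
    using stable_imps_imp_iffs[OF \<Gamma>] stable_iffs_imp_imps[OF \<Gamma> Def] by blast
qed

end
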